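(* Let $A$ be a partial ring and $(X,\mathcal{O}_X)=\mathrm{Spec}(A)$. For any element $s\in A$, there exists a monomorphism (injective homomorphism of partial rings) $A_s\to\mathcal{O}_X(D(s))$.
   Context: A partial ring is a set $A$ with $0$, a set $A_2\subseteq A\times A$ of summable pairs and a partial addition $+\colon A_2\to A$ (with $0$ a unit summable with everything, commutative, and associative in the sense: $(a,b),(a+b,c)\in A_2$ iff $(b,c),(a,b+c)\in A_2$, and then $(a+b)+c=a+(b+c)$), together with a commutative associative multiplication with unit $1$ such that $0\cdot a=0$ and $(a_1,a_2)\in A_2\Rightarrow(a_1x,a_2x)\in A_2$, $(a_1+a_2)x=a_1x+a_2x$. For a multiplicative subset $S$, $S^{-1}A$ is the set of classes $a/s$ with $a/s=b/t$ iff $uta=usb$ for some $u\in S$, product $\frac{a}{s}\frac{b}{t}=\frac{ab}{st}$, and $(a/s,b/t)$ summable iff $(uta,usb)\in A_2$ for some $u\in S$; $A_s$ denotes the localization at $\{s^k:k\in\mathbb{N}\}$. $X=X_A$ is the set of prime ideals of $A$ with topology generated by $D(a)=\{\mathfrak p: a\notin\mathfrak p\}$. For open $U$, $S_U=\{a: a\notin\mathfrak p\ \forall\mathfrak p\in U\}$; $\mathcal{O}_X$ is the sheafification of the presheaf $U\mapsto S_U^{-1}A$. $\mathrm{Spec}(A)=(X_A,\mathcal{O}_X)$. *)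

theory Defs
  imports Complex_Main
begin

record 'a pring =
  pr_carrier :: "'a set"
  pr_zero :: 'a
  pr_one :: 'a
  pr_summ :: "('a \<times> 'a) set"
  pr_add :: "'a \<Rightarrow> 'a \<Rightarrow> 'a"
  pr_mult :: "'a \<Rightarrow> 'a \<Rightarrow> 'a"

definition partial_ring :: "'a pring \<Rightarrow> bool" where
  "partial_ring A \<longleftrightarrow>
     (let C = pr_carrier A; S = pr_summ A; ad = pr_add A; mu = pr_mult A;
          z = pr_zero A; e = pr_one A in
      z \<in> C \<and> e \<in> C \<and> S \<subseteq> C \<times> C
    \<and> (\<forall>(a,b)\<in>S. ad a b \<in> C)
    \<and> (\<forall>a\<in>C. (a, z) \<in> S \<and> ad a z = a)
    \<and> (\<forall>(a,b)\<in>S. (b,a) \<in> S \<and> ad a b = ad b a)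
    \<and> (\<forall>a\<in>C. \<forall>b\<in>C. \<forall>c\<in>C.
          (((a,b) \<in> S \<and> (ad a b, c) \<in> S) \<longleftrightarrow> ((b,c) \<in> S \<and> (a, ad b c) \<in> S))
        \<and> (((a,b) \<in> S \<and> (ad a b, c) \<in> S) \<longrightarrow> ad (ad a b) c = ad a (ad b c)))
    \<and> (\<forall>a\<in>C. \<forall>b\<in>C. mu a b \<in> C)
    \<and> (\<forall>a\<in>C. \<forall>b\<in>C. mu a b = mu b a)
    \<and> (\<forall>a\<in>C. \<forall>b\<in>C. \<forall>c\<in>C. mu (mu a b) c = mu a (mu b c))
    \<and> (\<forall>a\<in>C. mu e a = a)
    \<and> (\<forall>a\<in>C. mu z a = z)
    \<and> (\<forall>(a1,a2)\<in>S. \<forall>x\<in>C. (mu a1 x, mu a2 x) \<in> S \<and> mu (ad a1 a2) x = ad (mu a1 x) (mu a2 x)))"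

definition pr_hom :: "'a pring \<Rightarrow> 'b pring \<Rightarrow> ('a \<Rightarrow> 'b) \<Rightarrow> bool" where
  "pr_hom A B f \<longleftrightarrow>
     f ` pr_carrier A \<subseteq> pr_carrier B
   \<and> f (pr_zero A) = pr_zero B \<and> f (pr_one A) = pr_one B
   \<and> (\<forall>a\<in>pr_carrier A. \<forall>b\<in>pr_carrier A. f (pr_mult A a b) = pr_mult B (f a) (f b))
   \<and> (\<forall>(a,b)\<in>pr_summ A. (f a, f b) \<in> pr_summ B \<and> f (pr_add A a b) = pr_add B (f a) (f b))"

definition pr_mono :: "'a pring \<Rightarrow> 'b pring \<Rightarrow> ('a \<Rightarrow> 'b) \<Rightarrow> bool" where
  "pr_mono A B f \<longleftrightarrow> pr_hom A B f \<and> inj_on f (pr_carrier A)"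

definition pr_pow :: "'a pring \<Rightarrow> 'a \<Rightarrow> nat \<Rightarrow> 'a" where
  "pr_pow A s k = (pr_mult A s ^^ k) (pr_one A)"

definition loc_rel :: "'a pring \<Rightarrow> 'a set \<Rightarrow> (('a \<times> 'a) \<times> ('a \<times> 'a)) set" where
  "loc_rel A S = {((a,s),(b,t)). a \<in> pr_carrier A \<and> s \<in> S \<and> b \<in> pr_carrier A \<and> t \<in> S \<and>
      (\<exists>u\<in>S. pr_mult A u (pr_mult A t a) = pr_mult A u (pr_mult A s b))}"

definition loc_cls :: "'a pring \<Rightarrow> 'a set \<Rightarrow> 'a \<Rightarrow> 'a \<Rightarrow> ('a \<times> 'a) set" where
  "loc_cls A S a s = loc_rel A S `` {(a,s)}"

definition loc :: "'a pring \<Rightarrow> 'a set \<Rightarrow> ('a \<times> 'a) set pring" where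
  "loc A S = \<lparr>
     pr_carrier = (pr_carrier A \<times> S) // loc_rel A S,
     pr_zero = loc_cls A S (pr_zero A) (pr_one A),
     pr_one = loc_cls A S (pr_one A) (pr_one A),
     pr_summ = {(X,Y). X \<in> (pr_carrier A \<times> S) // loc_rel A S \<and> Y \<in> (pr_carrier A \<times> S) // loc_rel A S \<and>
        (\<exists>a s b t u. (a,s) \<in> X \<and> (b,t) \<in> Y \<and> u \<in> S \<and>
           (pr_mult A u (pr_mult A t a), pr_mult A u (pr_mult A s b)) \<in> pr_summ A)},
     pr_add = (\<lambda>X Y. SOME Z. \<exists>a s b t u. (a,s) \<in> X \<and> (b,t) \<in> Y \<and> u \<in> S \<and>
           (pr_mult A u (pr_mult A t a), pr_mult A u (pr_mult A s b)) \<in> pr_summ A \<and>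
           Z = loc_cls A S (pr_add A (pr_mult A u (pr_mult A t a)) (pr_mult A u (pr_mult A s b)))
                           (pr_mult A u (pr_mult A s t))),
     pr_mult = (\<lambda>X Y. SOME Z. \<exists>a s b t. (a,s) \<in> X \<and> (b,t) \<in> Y \<and>
           Z = loc_cls A S (pr_mult A a b) (pr_mult A s t)) \<rparr>"

definition loc_at :: "'a pring \<Rightarrow> 'a \<Rightarrow> ('a \<times> 'a) set pring" where
  "loc_at A s = loc A {pr_pow A s k | k. True}"

definition pr_ideal :: "'a pring \<Rightarrow> 'a set \<Rightarrow> bool" where
  "pr_ideal A I \<longleftrightarrow> I \<subseteq> pr_carrier A \<and> pr_zero A \<in> I
     \<and> (\<forall>a\<in>I. \<forall>b\<in>I. (a,b) \<in> pr_summ A \<longrightarrow> pr_add A a b \<in> I)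
     \<and> (\<forall>a\<in>I. \<forall>x\<in>pr_carrier A. pr_mult A x a \<in> I)"

definition pr_prime :: "'a pring \<Rightarrow> 'a set \<Rightarrow> bool" where
  "pr_prime A P \<longleftrightarrow> pr_ideal A P \<and> P \<noteq> pr_carrier A
     \<and> (\<forall>a\<in>pr_carrier A. \<forall>b\<in>pr_carrier A. pr_mult A a b \<in> P \<longrightarrow> a \<in> P \<or> b \<in> P)"

definition Spec_pts :: "'a pring \<Rightarrow> 'a set set" where
  "Spec_pts A = {P. pr_prime A P}"

definition basicD :: "'a pring \<Rightarrow> 'a \<Rightarrow> 'a set set" where
  "basicD A a = {P \<in> Spec_pts A. a \<notin> P}"

definition spec_open :: "'a pring \<Rightarrow> 'a set set \<Rightarrow> bool" where
  "spec_open A U \<longleftrightarrow> U \<subseteq> Spec_pts A \<and>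
     (generate_topology {basicD A a | a. a \<in> pr_carrier A} U \<or> U = Spec_pts A)"

definition S_of :: "'a pring \<Rightarrow> 'a set set \<Rightarrow> 'a set" where
  "S_of A U = {a \<in> pr_carrier A. \<forall>P\<in>U. a \<notin> P}"

definition presh :: "'a pring \<Rightarrow> 'a set set \<Rightarrow> ('a \<times> 'a) set pring" where
  "presh A U = loc A (S_of A U)"

definition presh_res :: "'a pring \<Rightarrow> 'a set set \<Rightarrow> 'a set set \<Rightarrow> ('a \<times> 'a) set \<Rightarrow> ('a \<times> 'a) set" where
  "presh_res A U V X = (SOME Y. \<exists>a s. (a,s) \<in> X \<and> Y = loc_cls A (S_of A V) a s)"

type_synonym 'a germ = "('a set set \<times> ('a \<times> 'a) set) set"

definition germ_rel :: "'a pring \<Rightarrow> 'a set \<Rightarrow> (('a set set \<times> ('a \<times> 'a) set) \<times> ('a set set \<times> ('a \<times> 'a) set)) set" where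
  "germ_rel A p = {((U,x),(V,y)).
      spec_open A U \<and> p \<in> U \<and> x \<in> pr_carrier (presh A U) \<and>
      spec_open A V \<and> p \<in> V \<and> y \<in> pr_carrier (presh A V) \<and>
      (\<exists>W. spec_open A W \<and> p \<in> W \<and> W \<subseteq> U \<and> W \<subseteq> V \<and>
           presh_res A U W x = presh_res A V W y)}"

definition germ :: "'a pring \<Rightarrow> 'a set \<Rightarrow> 'a set set \<Rightarrow> ('a \<times> 'a) set \<Rightarrow> 'a germ" where
  "germ A p U x = germ_rel A p `` {(U,x)}"

definition stalk_carrier :: "'a pring \<Rightarrow> 'a set \<Rightarrow> 'a germ set" where
  "stalk_carrier A p = {(U,x). spec_open A U \<and> p \<in> U \<and> x \<in> pr_carrier (presh A U)} // germ_rel A p"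

definition stalk :: "'a pring \<Rightarrow> 'a set \<Rightarrow> 'a germ pring" where
  "stalk A p = \<lparr>
     pr_carrier = stalk_carrier A p,
     pr_zero = germ A p (Spec_pts A) (pr_zero (presh A (Spec_pts A))),
     pr_one = germ A p (Spec_pts A) (pr_one (presh A (Spec_pts A))),
     pr_summ = {(g,h). g \<in> stalk_carrier A p \<and> h \<in> stalk_carrier A p \<and>
        (\<exists>W x y. (W,x) \<in> g \<and> (W,y) \<in> h \<and> (x,y) \<in> pr_summ (presh A W))},
     pr_add = (\<lambda>g h. SOME k. \<exists>W x y. (W,x) \<in> g \<and> (W,y) \<in> h \<and> (x,y) \<in> pr_summ (presh A W) \<and>
        k = germ A p W (pr_add (presh A W) x y)),
     pr_mult = (\<lambda>g h. SOME k. \<exists>W x y. (W,x) \<in> g \<and> (W,y) \<in> h \<and>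
        k = germ A p W (pr_mult (presh A W) x y)) \<rparr>"

text \<open>\<open>\<O>_X(U)\<close>: sections of the sheafification over an open \<open>U\<close>, i.e. families of germs
  that are locally induced by a single element of the presheaf; operations pointwise.\<close>
definition OX_carrier :: "'a pring \<Rightarrow> 'a set set \<Rightarrow> ('a set \<Rightarrow> 'a germ) set" where
  "OX_carrier A U = {\<sigma>. (\<forall>p\<in>U. \<sigma> p \<in> stalk_carrier A p) \<and> (\<forall>p. p \<notin> U \<longrightarrow> \<sigma> p = undefined) \<and>
      (\<forall>p\<in>U. \<exists>V x. spec_open A V \<and> p \<in> V \<and> V \<subseteq> U \<and> x \<in> pr_carrier (presh A V) \<and>
                    (\<forall>q\<in>V. \<sigma> q = germ A q V x))}"

definition OX :: "'a pring \<Rightarrow> 'a set set \<Rightarrow> ('a set \<Rightarrow> 'a germ) pring" where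
  "OX A U = \<lparr>
     pr_carrier = OX_carrier A U,
     pr_zero = (\<lambda>p. if p \<in> U then pr_zero (stalk A p) else undefined),
     pr_one = (\<lambda>p. if p \<in> U then pr_one (stalk A p) else undefined),
     pr_summ = {(\<sigma>,\<tau>). \<sigma> \<in> OX_carrier A U \<and> \<tau> \<in> OX_carrier A U \<and>
        (\<forall>p\<in>U. (\<sigma> p, \<tau> p) \<in> pr_summ (stalk A p))},
     pr_add = (\<lambda>\<sigma> \<tau> p. if p \<in> U then pr_add (stalk A p) (\<sigma> p) (\<tau> p) else undefined),
     pr_mult = (\<lambda>\<sigma> \<tau> p. if p \<in> U then pr_mult (stalk A p) (\<sigma> p) (\<tau> p) else undefined) \<rparr>"

end

theory Submission
  imports Defs
begin

text \<open>An element \<open>a/t\<close> of \<open>A\<^sub>s\<close> is sent to the section \<open>p \<mapsto> germ\<^sub>p(a/t)\<close> over \<open>D(s)\<close>;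
  since the stalk operations are computed on representatives, this is a homomorphism of partial
  rings. For injectivity, suppose \<open>a/t\<close> and \<open>b/r\<close> have the same image. At each prime \<open>p \<in> D(s)\<close>
  they then agree on a neighbourhood \<open>W\<close>, i.e. \<open>u r a = u t b\<close> for some \<open>u\<close> outside all primes
  of \<open>W\<close>, so the ideal \<open>{u. u r a = u t b}\<close> lies in no prime of \<open>D(s)\<close>. As every prime missing
  the powers of \<open>s\<close> lies in \<open>D(s)\<close>, no prime containing the ideal misses them, and a Zorn's lemma
  argument shows that the ideal contains a power of \<open>s\<close>, whence \<open>a/t = b/r\<close>.\<close>

locale partial_ring_ctx =
  fixes A :: "'a pring"
  assumes partial_ring: "partial_ring A"
begin

abbreviation car where "car \<equiv> pr_carrier A"
abbreviation summ where "summ \<equiv> pr_summ A"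
abbreviation pzero (\<open>\<zero>\<close>) where "\<zero> \<equiv> pr_zero A"
abbreviation pone (\<open>\<one>\<close>) where "\<one> \<equiv> pr_one A"
abbreviation pmult (infixl \<open>\<cdot>\<close> 70) where "a \<cdot> b \<equiv> pr_mult A a b"
abbreviation padd (infixl \<open>\<oplus>\<close> 65) where "a \<oplus> b \<equiv> pr_add A a b"

lemma zero_in_carrier [simp]: "\<zero> \<in> car"
  and one_in_carrier [simp]: "\<one> \<in> car"
  using partial_ring unfolding partial_ring_def Let_def by auto

lemma summ_in_carrier: "(a, b) \<in> summ \<Longrightarrow> a \<in> car \<and> b \<in> car"
  using partial_ring unfolding partial_ring_def Let_def by auto

lemma add_in_carrier [simp]: "(a, b) \<in> summ \<Longrightarrow> a \<oplus> b \<in> car"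
  using partial_ring unfolding partial_ring_def Let_def by auto

lemma mult_in_carrier [simp]: "a \<in> car \<Longrightarrow> b \<in> car \<Longrightarrow> a \<cdot> b \<in> car"
  using partial_ring unfolding partial_ring_def Let_def by auto

lemma mult_comm: "a \<in> car \<Longrightarrow> b \<in> car \<Longrightarrow> a \<cdot> b = b \<cdot> a"
  using partial_ring unfolding partial_ring_def Let_def by auto

lemma mult_assoc: "a \<in> car \<Longrightarrow> b \<in> car \<Longrightarrow> c \<in> car \<Longrightarrow> a \<cdot> b \<cdot> c = a \<cdot> (b \<cdot> c)"
  using partial_ring unfolding partial_ring_def Let_def by auto

lemma mult_left_commute: "a \<in> car \<Longrightarrow> b \<in> car \<Longrightarrow> c \<in> car \<Longrightarrow> a \<cdot> (b \<cdot> c) = b \<cdot> (a \<cdot> c)"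
  by (metis mult_assoc mult_comm)

lemmas mult_ac = mult_assoc mult_comm mult_left_commute

lemma mult_one_left [simp]: "a \<in> car \<Longrightarrow> \<one> \<cdot> a = a"
  using partial_ring unfolding partial_ring_def Let_def by auto

lemma mult_one_right [simp]: "a \<in> car \<Longrightarrow> a \<cdot> \<one> = a"
  using mult_one_left mult_comm one_in_carrier by metis

lemma mult_zero_left [simp]: "a \<in> car \<Longrightarrow> \<zero> \<cdot> a = \<zero>"
  using partial_ring unfolding partial_ring_def Let_def by auto

lemma distrib_right:
  "(a, b) \<in> summ \<Longrightarrow> c \<in> car \<Longrightarrow> (a \<cdot> c, b \<cdot> c) \<in> summ \<and> (a \<oplus> b) \<cdot> c = a \<cdot> c \<oplus> b \<cdot> c"
  using partial_ring unfolding partial_ring_def Let_def by fast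

lemma distrib_left:
  "(a, b) \<in> summ \<Longrightarrow> c \<in> car \<Longrightarrow> (c \<cdot> a, c \<cdot> b) \<in> summ \<and> c \<cdot> (a \<oplus> b) = c \<cdot> a \<oplus> c \<cdot> b"
  using distrib_right[of a b c] summ_in_carrier[of a b] by (simp add: mult_comm)

lemma mult_add_eq:
  assumes "(a, b) \<in> summ" "(a', b') \<in> summ" "c \<in> car" "d \<in> car"
    and "c \<cdot> a = d \<cdot> a'" "c \<cdot> b = d \<cdot> b'"
  shows "c \<cdot> (a \<oplus> b) = d \<cdot> (a' \<oplus> b')"
  using assms distrib_left by metis

section \<open>Localization\<close>

definition mult_subset :: "'a set \<Rightarrow> bool" where
  "mult_subset S \<longleftrightarrow> S \<subseteq> car \<and> \<one> \<in> S \<and> (\<forall>x\<in>S. \<forall>y\<in>S. x \<cdot> y \<in> S)"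

lemma mult_subsetD:
  "mult_subset S \<Longrightarrow> x \<in> S \<Longrightarrow> x \<in> car"
  "mult_subset S \<Longrightarrow> \<one> \<in> S"
  "mult_subset S \<Longrightarrow> x \<in> S \<Longrightarrow> y \<in> S \<Longrightarrow> x \<cdot> y \<in> S"
  unfolding mult_subset_def by auto

lemma loc_rel_equiv:
  assumes S: "mult_subset S"
  shows "equiv (car \<times> S) (loc_rel A S)"
proof (rule equivI)
  show "refl_on (car \<times> S) (loc_rel A S)"
    by (rule refl_onI) (auto simp: loc_rel_def)
  show "sym (loc_rel A S)"
    unfolding sym_def loc_rel_def by (auto, metis)
  show "trans (loc_rel A S)"
  proof (rule transI)
    fix x y z assume "(x, y) \<in> loc_rel A S" "(y, z) \<in> loc_rel A S"
    then obtain a s b t c q u v where eqs: "x = (a, s)" "y = (b, t)" "z = (c, q)"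
      and mem: "a \<in> car" "b \<in> car" "c \<in> car" "s \<in> S" "t \<in> S" "q \<in> S" "u \<in> S" "v \<in> S"
      and u: "u \<cdot> (t \<cdot> a) = u \<cdot> (s \<cdot> b)" and v: "v \<cdot> (q \<cdot> b) = v \<cdot> (t \<cdot> c)"
      unfolding loc_rel_def by auto
    have C: "s \<in> car" "t \<in> car" "q \<in> car" "u \<in> car" "v \<in> car"
      using mem mult_subsetD(1)[OF S] by auto
    have "u \<cdot> v \<cdot> t \<cdot> (q \<cdot> a) = v \<cdot> q \<cdot> (u \<cdot> (t \<cdot> a))"
      using C mem by (simp add: mult_ac)
    also have "\<dots> = u \<cdot> s \<cdot> (v \<cdot> (q \<cdot> b))" using C mem u by (simp add: mult_ac)
    also have "\<dots> = u \<cdot> v \<cdot> t \<cdot> (s \<cdot> c)" using C mem v by (simp add: mult_ac)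
    finally show "(x, z) \<in> loc_rel A S"
      unfolding eqs loc_rel_def using mem C mult_subsetD(3)[OF S]
      by (auto simp: mult_assoc intro!: bexI[of _ "u \<cdot> v \<cdot> t"])
  qed
qed (auto simp: loc_rel_def)

context
  fixes S assumes S: "mult_subset S"
begin

lemma loc_cls_eq_iff:
  assumes "a \<in> car" "t \<in> S" "b \<in> car" "r \<in> S"
  shows "loc_cls A S a t = loc_cls A S b r \<longleftrightarrow> (\<exists>u\<in>S. u \<cdot> (r \<cdot> a) = u \<cdot> (t \<cdot> b))"
proof -
  have "loc_cls A S a t = loc_cls A S b r \<longleftrightarrow> ((a, t), (b, r)) \<in> loc_rel A S"
    unfolding loc_cls_def using eq_equiv_class_iff[OF loc_rel_equiv[OF S]] assms by auto
  then show ?thesis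
    unfolding loc_rel_def using assms by auto
qed

lemma loc_cls_self: "a \<in> car \<Longrightarrow> t \<in> S \<Longrightarrow> (a, t) \<in> loc_cls A S a t"
  unfolding loc_cls_def using equiv_class_self[OF loc_rel_equiv[OF S]] by auto

lemma loc_cls_in_quotient: "a \<in> car \<Longrightarrow> t \<in> S \<Longrightarrow> loc_cls A S a t \<in> (car \<times> S) // loc_rel A S"
  unfolding loc_cls_def by (auto intro: quotientI)

lemma loc_quotientE:
  assumes "X \<in> (car \<times> S) // loc_rel A S"
  obtains a t where "a \<in> car" "t \<in> S" "X = loc_cls A S a t"
  using assms unfolding loc_cls_def by (auto elim: quotientE)

lemma loc_quotient_mem:
  assumes "X \<in> (car \<times> S) // loc_rel A S" "(b, r) \<in> X"
  shows "b \<in> car" "r \<in> S" "X = loc_cls A S b r"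
proof -
  obtain a t where a: "a \<in> car" "t \<in> S" "X = loc_cls A S a t"
    using assms(1) by (rule loc_quotientE)
  then have rel: "((a, t), (b, r)) \<in> loc_rel A S"
    using assms(2) unfolding loc_cls_def by auto
  then show "b \<in> car" "r \<in> S" unfolding loc_rel_def by auto
  show "X = loc_cls A S b r"
    unfolding a(3) loc_cls_def using equiv_class_eq[OF loc_rel_equiv[OF S] rel] .
qed

lemma loc_cls_mult_cong:
  assumes a: "a \<in> car" "t \<in> S" "a' \<in> car" "t' \<in> S"
    and b: "b \<in> car" "r \<in> S" "b' \<in> car" "r' \<in> S"
    and "loc_cls A S a t = loc_cls A S a' t'" "loc_cls A S b r = loc_cls A S b' r'"
  shows "loc_cls A S (a \<cdot> b) (t \<cdot> r) = loc_cls A S (a' \<cdot> b') (t' \<cdot> r')"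
proof -
  obtain u v where uv: "u \<in> S" "v \<in> S" "u \<cdot> (t' \<cdot> a) = u \<cdot> (t \<cdot> a')" "v \<cdot> (r' \<cdot> b) = v \<cdot> (r \<cdot> b')"
    using assms loc_cls_eq_iff by metis
  have C: "t \<in> car" "t' \<in> car" "r \<in> car" "r' \<in> car" "u \<in> car" "v \<in> car"
    using mult_subsetD(1)[OF S] a b uv by auto
  have "u \<cdot> v \<cdot> (t' \<cdot> r' \<cdot> (a \<cdot> b)) = u \<cdot> (t' \<cdot> a) \<cdot> (v \<cdot> (r' \<cdot> b))"
    using C a b by (simp add: mult_ac)
  also have "\<dots> = u \<cdot> v \<cdot> (t \<cdot> r \<cdot> (a' \<cdot> b'))"
    using C a b uv by (simp add: mult_ac)
  finally show ?thesis
    using loc_cls_eq_iff a b uv mult_subsetD(3)[OF S] by auto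
qed

text \<open>The sum of \<open>a/t\<close> and \<open>b/r\<close> is represented by \<open>(u r a + u t b)/(u t r)\<close>, where \<open>u\<close>
  witnesses summability; its class depends neither on \<open>u\<close> nor on the representatives.\<close>

lemma loc_cls_add_cong:
  assumes a: "a \<in> car" "t \<in> S" "a' \<in> car" "t' \<in> S"
    and b: "b \<in> car" "r \<in> S" "b' \<in> car" "r' \<in> S"
    and "loc_cls A S a t = loc_cls A S a' t'" "loc_cls A S b r = loc_cls A S b' r'"
    and u: "u \<in> S" "u' \<in> S"
    and sm: "(u \<cdot> (r \<cdot> a), u \<cdot> (t \<cdot> b)) \<in> summ" "(u' \<cdot> (r' \<cdot> a'), u' \<cdot> (t' \<cdot> b')) \<in> summ"
  shows "loc_cls A S (u \<cdot> (r \<cdot> a) \<oplus> u \<cdot> (t \<cdot> b)) (u \<cdot> (t \<cdot> r)) =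
         loc_cls A S (u' \<cdot> (r' \<cdot> a') \<oplus> u' \<cdot> (t' \<cdot> b')) (u' \<cdot> (t' \<cdot> r'))"
proof -
  obtain w1 w2 where w: "w1 \<in> S" "w2 \<in> S"
      "w1 \<cdot> (t' \<cdot> a) = w1 \<cdot> (t \<cdot> a')" "w2 \<cdot> (r' \<cdot> b) = w2 \<cdot> (r \<cdot> b')"
    using assms loc_cls_eq_iff by metis
  have C: "t \<in> car" "t' \<in> car" "r \<in> car" "r' \<in> car" "u \<in> car" "u' \<in> car" "w1 \<in> car" "w2 \<in> car"
    using mult_subsetD(1)[OF S] a b u w by auto
  let ?v = "w1 \<cdot> w2"
  have "?v \<cdot> (u' \<cdot> (t' \<cdot> r')) \<cdot> (u \<cdot> (r \<cdot> a)) = w2 \<cdot> u' \<cdot> r' \<cdot> u \<cdot> r \<cdot> (w1 \<cdot> (t' \<cdot> a))"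
    using C a by (simp add: mult_ac)
  also have "\<dots> = ?v \<cdot> (u \<cdot> (t \<cdot> r)) \<cdot> (u' \<cdot> (r' \<cdot> a'))"
    using C a w by (simp add: mult_ac)
  finally have eq_a: "?v \<cdot> (u' \<cdot> (t' \<cdot> r')) \<cdot> (u \<cdot> (r \<cdot> a)) = ?v \<cdot> (u \<cdot> (t \<cdot> r)) \<cdot> (u' \<cdot> (r' \<cdot> a'))" .
  have "?v \<cdot> (u' \<cdot> (t' \<cdot> r')) \<cdot> (u \<cdot> (t \<cdot> b)) = w1 \<cdot> u' \<cdot> t' \<cdot> u \<cdot> t \<cdot> (w2 \<cdot> (r' \<cdot> b))"
    using C b by (simp add: mult_ac)
  also have "\<dots> = ?v \<cdot> (u \<cdot> (t \<cdot> r)) \<cdot> (u' \<cdot> (t' \<cdot> b'))"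
    using C b w by (simp add: mult_ac)
  finally have eq_b: "?v \<cdot> (u' \<cdot> (t' \<cdot> r')) \<cdot> (u \<cdot> (t \<cdot> b)) = ?v \<cdot> (u \<cdot> (t \<cdot> r)) \<cdot> (u' \<cdot> (t' \<cdot> b'))" .
  have "?v \<cdot> (u' \<cdot> (t' \<cdot> r')) \<cdot> (u \<cdot> (r \<cdot> a) \<oplus> u \<cdot> (t \<cdot> b))
      = ?v \<cdot> (u \<cdot> (t \<cdot> r)) \<cdot> (u' \<cdot> (r' \<cdot> a') \<oplus> u' \<cdot> (t' \<cdot> b'))"
    by (rule mult_add_eq[OF sm _ _ eq_a eq_b]) (use C in simp_all)
  then show ?thesis
    using loc_cls_eq_iff a b u w C sm mult_subsetD(3)[OF S] summ_in_carrier
    by (auto simp: mult_assoc intro!: bexI[of _ ?v])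
qed

lemma loc_mult_cls:
  assumes "a \<in> car" "t \<in> S" "b \<in> car" "r \<in> S"
  shows "pr_mult (loc A S) (loc_cls A S a t) (loc_cls A S b r) = loc_cls A S (a \<cdot> b) (t \<cdot> r)"
  unfolding loc_def pring.simps
proof (rule some_equality)
  fix Z assume "\<exists>a' t' b' r'. (a', t') \<in> loc_cls A S a t \<and> (b', r') \<in> loc_cls A S b r \<and>
      Z = loc_cls A S (a' \<cdot> b') (t' \<cdot> r')"
  then show "Z = loc_cls A S (a \<cdot> b) (t \<cdot> r)"
    using assms loc_quotient_mem[OF loc_cls_in_quotient] loc_cls_mult_cong by metis
qed (use assms loc_cls_self in blast)

lemma loc_summ_cls:
  assumes "a \<in> car" "t \<in> S" "b \<in> car" "r \<in> S" "u \<in> S" "(u \<cdot> (r \<cdot> a), u \<cdot> (t \<cdot> b)) \<in> summ"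
  shows "(loc_cls A S a t, loc_cls A S b r) \<in> pr_summ (loc A S)"
  unfolding loc_def pring.simps using assms loc_cls_self loc_cls_in_quotient by blast

lemma loc_add_cls:
  assumes "a \<in> car" "t \<in> S" "b \<in> car" "r \<in> S" "u \<in> S" "(u \<cdot> (r \<cdot> a), u \<cdot> (t \<cdot> b)) \<in> summ"
  shows "pr_add (loc A S) (loc_cls A S a t) (loc_cls A S b r) =
         loc_cls A S (u \<cdot> (r \<cdot> a) \<oplus> u \<cdot> (t \<cdot> b)) (u \<cdot> (t \<cdot> r))"
  unfolding loc_def pring.simps
proof (rule some_equality)
  fix Z assume "\<exists>a' t' b' r' u'. (a', t') \<in> loc_cls A S a t \<and> (b', r') \<in> loc_cls A S b r \<and> u' \<in> S \<and>
      (u' \<cdot> (r' \<cdot> a'), u' \<cdot> (t' \<cdot> b')) \<in> summ \<and>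
      Z = loc_cls A S (u' \<cdot> (r' \<cdot> a') \<oplus> u' \<cdot> (t' \<cdot> b')) (u' \<cdot> (t' \<cdot> r'))"
  then show "Z = loc_cls A S (u \<cdot> (r \<cdot> a) \<oplus> u \<cdot> (t \<cdot> b)) (u \<cdot> (t \<cdot> r))"
    using assms loc_quotient_mem[OF loc_cls_in_quotient] loc_cls_add_cong by metis
qed (use assms loc_cls_self in blast)

end

lemma loc_cls_eq_mono:
  assumes "mult_subset S" "mult_subset S'" "S \<subseteq> S'" "a \<in> car" "t \<in> S" "b \<in> car" "r \<in> S"
    and "loc_cls A S a t = loc_cls A S b r"
  shows "loc_cls A S' a t = loc_cls A S' b r"
  using assms loc_cls_eq_iff[OF assms(1)] loc_cls_eq_iff[OF assms(2)] by (metis subsetD)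

end

lemma loc_carrier: "pr_carrier (loc A S) = (pr_carrier A \<times> S) // loc_rel A S"
  and loc_zero: "pr_zero (loc A S) = loc_cls A S (pr_zero A) (pr_one A)"
  and loc_one: "pr_one (loc A S) = loc_cls A S (pr_one A) (pr_one A)"
  unfolding loc_def by simp_all

section \<open>The prime spectrum\<close>

definition pr_powers :: "'a pring \<Rightarrow> 'a \<Rightarrow> 'a set" where
  "pr_powers A s = {pr_pow A s k | k. True}"

lemma loc_at_eq: "loc_at A s = loc A (pr_powers A s)"
  unfolding loc_at_def pr_powers_def ..

lemma basicD_subset: "basicD A s \<subseteq> Spec_pts A"
  unfolding basicD_def by auto

lemma spec_open_subset: "spec_open A U \<Longrightarrow> U \<subseteq> Spec_pts A"
  unfolding spec_open_def by auto

lemma spec_open_Spec_pts: "spec_open A (Spec_pts A)"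
  unfolding spec_open_def by auto

lemma spec_open_basicD: "s \<in> pr_carrier A \<Longrightarrow> spec_open A (basicD A s)"
  unfolding spec_open_def using basicD_subset[of A s] by (auto intro: generate_topology.Basis)

lemma spec_open_Int: "spec_open A U \<Longrightarrow> spec_open A V \<Longrightarrow> spec_open A (U \<inter> V)"
  unfolding spec_open_def
  by (auto simp: Int_absorb1 Int_absorb2 intro: generate_topology.Int)

lemma S_of_antimono: "V \<subseteq> W \<Longrightarrow> S_of A W \<subseteq> S_of A V"
  unfolding S_of_def by auto

lemma presh_carrier: "pr_carrier (presh A U) = (pr_carrier A \<times> S_of A U) // loc_rel A (S_of A U)"
  unfolding presh_def loc_def by simp

context partial_ring_ctx
begin

lemma prime_one_notin: "pr_prime A P \<Longrightarrow> \<one> \<notin> P"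
  unfolding pr_prime_def pr_ideal_def by (metis mult_one_right subsetI subset_antisym)

lemma mult_subset_S_of:
  assumes "V \<subseteq> Spec_pts A"
  shows "mult_subset (S_of A V)"
proof -
  have prime: "pr_prime A P" if "P \<in> V" for P
    using assms that unfolding Spec_pts_def by auto
  show ?thesis
    unfolding mult_subset_def S_of_def
    using prime_one_notin[OF prime] prime[unfolded pr_prime_def] by (auto, meson)
qed

lemma mult_subset_S_of_open: "spec_open A U \<Longrightarrow> mult_subset (S_of A U)"
  using mult_subset_S_of spec_open_subset by blast

lemma pr_pow_0: "pr_pow A s 0 = \<one>"
  and pr_pow_Suc: "pr_pow A s (Suc k) = s \<cdot> pr_pow A s k"
  unfolding pr_pow_def by simp_all

lemma pr_pow_in_carrier: "s \<in> car \<Longrightarrow> pr_pow A s k \<in> car"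
  by (induct k) (auto simp: pr_pow_0 pr_pow_Suc)

lemma pr_pow_add: "s \<in> car \<Longrightarrow> pr_pow A s m \<cdot> pr_pow A s n = pr_pow A s (m + n)"
  by (induct m) (auto simp: pr_pow_0 pr_pow_Suc pr_pow_in_carrier mult_assoc)

lemma mult_subset_powers:
  assumes "s \<in> car"
  shows "mult_subset (pr_powers A s)"
  unfolding mult_subset_def pr_powers_def
proof (intro conjI ballI subsetI)
  show "\<one> \<in> {pr_pow A s k |k. True}"
    using pr_pow_0[of s, symmetric] by blast
next
  fix x y assume "x \<in> {pr_pow A s k |k. True}" "y \<in> {pr_pow A s k |k. True}"
  then show "x \<cdot> y \<in> {pr_pow A s k |k. True}"
    using pr_pow_add[OF assms] by blast
qed (use pr_pow_in_carrier[OF assms] in blast)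

lemma base_in_powers: "s \<in> car \<Longrightarrow> s \<in> pr_powers A s"
  unfolding pr_powers_def using pr_pow_Suc[of s 0] pr_pow_0[of s] by (auto intro!: exI[of _ 1])

lemma powers_subset_S_of_basicD: "s \<in> car \<Longrightarrow> pr_powers A s \<subseteq> S_of A (basicD A s)"
proof -
  assume s: "s \<in> car"
  have "pr_pow A s k \<notin> P" if "P \<in> basicD A s" for P k
    using that prime_one_notin s pr_pow_in_carrier[OF s]
    by (induct k) (auto simp: basicD_def Spec_pts_def pr_pow_0 pr_pow_Suc pr_prime_def)
  then show ?thesis
    unfolding pr_powers_def S_of_def using pr_pow_in_carrier[OF s] by auto
qed

lemma presh_res_cls:
  assumes "mult_subset T" "V \<subseteq> Spec_pts A" "T \<subseteq> S_of A V" "a \<in> car" "t \<in> T"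
  shows "presh_res A U V (loc_cls A T a t) = loc_cls A (S_of A V) a t"
  unfolding presh_res_def
proof (rule some_equality)
  fix Y assume "\<exists>a' t'. (a', t') \<in> loc_cls A T a t \<and> Y = loc_cls A (S_of A V) a' t'"
  then show "Y = loc_cls A (S_of A V) a t"
    using assms loc_quotient_mem[OF assms(1) loc_cls_in_quotient]
      loc_cls_eq_mono[OF assms(1) mult_subset_S_of] by (metis subsetD)
qed (use assms loc_cls_self in blast)

end

section \<open>Germs\<close>

definition germ_dom :: "'a pring \<Rightarrow> 'a set \<Rightarrow> ('a set set \<times> ('a \<times> 'a) set) set" where
  "germ_dom A p = {(U, x). spec_open A U \<and> p \<in> U \<and> x \<in> pr_carrier (presh A U)}"

lemma stalk_carrier_eq: "stalk_carrier A p = germ_dom A p // germ_rel A p"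
  unfolding stalk_carrier_def germ_dom_def ..

context partial_ring_ctx
begin

lemma presh_quotientE:
  assumes "spec_open A U" "x \<in> pr_carrier (presh A U)"
  obtains a t where "a \<in> car" "t \<in> S_of A U" "x = loc_cls A (S_of A U) a t"
  using loc_quotientE[OF mult_subset_S_of_open[OF assms(1)]] assms(2) unfolding presh_carrier by metis

lemma loc_cls_eq_shrink:
  assumes "spec_open A W" "spec_open A W'" "W' \<subseteq> W"
    and "a \<in> car" "t \<in> S_of A W" "b \<in> car" "r \<in> S_of A W"
    and "loc_cls A (S_of A W) a t = loc_cls A (S_of A W) b r"
  shows "loc_cls A (S_of A W') a t = loc_cls A (S_of A W') b r"
  using loc_cls_eq_mono[OF mult_subset_S_of_open mult_subset_S_of_open S_of_antimono] assms
  by blast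

lemma germ_rel_cls_iff:
  assumes U: "spec_open A U" "p \<in> U" "a \<in> car" "t \<in> S_of A U"
    and V: "spec_open A V" "p \<in> V" "b \<in> car" "r \<in> S_of A V"
  shows "((U, loc_cls A (S_of A U) a t), (V, loc_cls A (S_of A V) b r)) \<in> germ_rel A p \<longleftrightarrow>
     (\<exists>W. spec_open A W \<and> p \<in> W \<and> W \<subseteq> U \<and> W \<subseteq> V \<and>
        loc_cls A (S_of A W) a t = loc_cls A (S_of A W) b r)"
proof -
  have "presh_res A U W (loc_cls A (S_of A U) a t) = loc_cls A (S_of A W) a t"
     "presh_res A V W (loc_cls A (S_of A V) b r) = loc_cls A (S_of A W) b r"
    if "spec_open A W" "W \<subseteq> U" "W \<subseteq> V" for W
    using that U V presh_res_cls[OF mult_subset_S_of_open spec_open_subset S_of_antimono]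
    by blast+
  moreover have "loc_cls A (S_of A U) a t \<in> pr_carrier (presh A U)"
     "loc_cls A (S_of A V) b r \<in> pr_carrier (presh A V)"
    unfolding presh_carrier using U V by (simp_all add: loc_cls_in_quotient mult_subset_S_of_open)
  ultimately show ?thesis
    unfolding germ_rel_def using U V by auto
qed

lemma germ_rel_trans: "trans (germ_rel A p)"
proof (rule transI)
  fix g h k assume gh: "(g, h) \<in> germ_rel A p" and hk: "(h, k) \<in> germ_rel A p"
  then obtain U V Z x y z where eqs: "g = (U, x)" "h = (V, y)" "k = (Z, z)"
    and opens: "spec_open A U" "p \<in> U" "spec_open A V" "p \<in> V" "spec_open A Z" "p \<in> Z"
    and sections: "x \<in> pr_carrier (presh A U)" "y \<in> pr_carrier (presh A V)"
      "z \<in> pr_carrier (presh A Z)"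
    unfolding germ_rel_def by auto
  obtain a t b r c q where
    U: "spec_open A U" "p \<in> U" "a \<in> car" "t \<in> S_of A U" "x = loc_cls A (S_of A U) a t"
    and V: "spec_open A V" "p \<in> V" "b \<in> car" "r \<in> S_of A V" "y = loc_cls A (S_of A V) b r"
    and Z: "spec_open A Z" "p \<in> Z" "c \<in> car" "q \<in> S_of A Z" "z = loc_cls A (S_of A Z) c q"
    using opens sections by (metis presh_quotientE)
  obtain W1 where W1: "spec_open A W1" "p \<in> W1" "W1 \<subseteq> U" "W1 \<subseteq> V"
      "loc_cls A (S_of A W1) a t = loc_cls A (S_of A W1) b r"
    using gh germ_rel_cls_iff[OF U(1-4) V(1-4)] unfolding eqs U(5) V(5) by auto
  obtain W2 where W2: "spec_open A W2" "p \<in> W2" "W2 \<subseteq> V" "W2 \<subseteq> Z"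
      "loc_cls A (S_of A W2) b r = loc_cls A (S_of A W2) c q"
    using hk germ_rel_cls_iff[OF V(1-4) Z(1-4)] unfolding eqs V(5) Z(5) by auto
  have W: "spec_open A (W1 \<inter> W2)" using W1 W2 spec_open_Int by blast
  have "t \<in> S_of A W1" "r \<in> S_of A W1" "r \<in> S_of A W2" "q \<in> S_of A W2"
    using U V Z W1 W2 S_of_antimono by blast+
  then have "loc_cls A (S_of A (W1 \<inter> W2)) a t = loc_cls A (S_of A (W1 \<inter> W2)) c q"
    using loc_cls_eq_shrink[OF W1(1) W, of a t b r] loc_cls_eq_shrink[OF W2(1) W, of b r c q]
      U V Z W1 W2 by auto
  then show "(g, k) \<in> germ_rel A p"
    unfolding eqs U(5) Z(5) using germ_rel_cls_iff[OF U(1-4) Z(1-4)] W W1 W2 by blast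
qed

lemma germ_rel_equiv: "equiv (germ_dom A p) (germ_rel A p)"
proof (rule equivI)
  show "germ_rel A p \<subseteq> germ_dom A p \<times> germ_dom A p"
    unfolding germ_rel_def germ_dom_def by auto
  show "refl_on (germ_dom A p) (germ_rel A p)"
  proof (rule refl_onI)
    fix g assume "g \<in> germ_dom A p"
    then obtain U x where g: "g = (U, x)" "spec_open A U" "p \<in> U" "x \<in> pr_carrier (presh A U)"
      unfolding germ_dom_def by auto
    then obtain a t where "a \<in> car" "t \<in> S_of A U" "x = loc_cls A (S_of A U) a t"
      by (metis presh_quotientE)
    with g show "(g, g) \<in> germ_rel A p" using germ_rel_cls_iff by blast
  qed
  show "sym (germ_rel A p)"
    unfolding germ_rel_def by (rule symI) (simp only: mem_Collect_eq case_prod_conv, blast)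
  show "trans (germ_rel A p)"
    by (rule germ_rel_trans)
qed

lemma germ_cls_in_dom:
  "spec_open A U \<Longrightarrow> p \<in> U \<Longrightarrow> a \<in> car \<Longrightarrow> t \<in> S_of A U \<Longrightarrow>
    (U, loc_cls A (S_of A U) a t) \<in> germ_dom A p"
  unfolding germ_dom_def presh_carrier using loc_cls_in_quotient[OF mult_subset_S_of_open] by auto

lemma germ_cls_self:
  "spec_open A U \<Longrightarrow> p \<in> U \<Longrightarrow> a \<in> car \<Longrightarrow> t \<in> S_of A U \<Longrightarrow>
    (U, loc_cls A (S_of A U) a t) \<in> germ A p U (loc_cls A (S_of A U) a t)"
  unfolding germ_def using equiv_class_self[OF germ_rel_equiv germ_cls_in_dom] .

lemma germ_cls_in_stalk:
  "spec_open A U \<Longrightarrow> p \<in> U \<Longrightarrow> a \<in> car \<Longrightarrow> t \<in> S_of A U \<Longrightarrow>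
    germ A p U (loc_cls A (S_of A U) a t) \<in> stalk_carrier A p"
  unfolding stalk_carrier_eq germ_def by (rule quotientI) (rule germ_cls_in_dom)

lemma germ_cls_eq_iff:
  assumes U: "spec_open A U" "p \<in> U" "a \<in> car" "t \<in> S_of A U"
    and V: "spec_open A V" "p \<in> V" "b \<in> car" "r \<in> S_of A V"
  shows "germ A p U (loc_cls A (S_of A U) a t) = germ A p V (loc_cls A (S_of A V) b r) \<longleftrightarrow>
     (\<exists>W. spec_open A W \<and> p \<in> W \<and> W \<subseteq> U \<and> W \<subseteq> V \<and>
        loc_cls A (S_of A W) a t = loc_cls A (S_of A W) b r)"
  unfolding germ_def eq_equiv_class_iff[OF germ_rel_equiv germ_cls_in_dom[OF U] germ_cls_in_dom[OF V]]
  by (rule germ_rel_cls_iff[OF U V])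

lemma germ_cls_change_open:
  assumes "spec_open A U" "p \<in> U" "spec_open A V" "p \<in> V"
    and "a \<in> car" "t \<in> S_of A U" "t \<in> S_of A V"
  shows "germ A p U (loc_cls A (S_of A U) a t) = germ A p V (loc_cls A (S_of A V) a t)"
proof -
  have "spec_open A (U \<inter> V)" "p \<in> U \<inter> V"
    using assms spec_open_Int by auto
  then show ?thesis
    using germ_cls_eq_iff[OF assms(1,2,5,6) assms(3,4,5,7)] by blast
qed

lemma germ_memD:
  assumes "(W, x) \<in> germ A p U y"
  shows "spec_open A W" "p \<in> W" "x \<in> pr_carrier (presh A W)" "germ A p U y = germ A p W x"
proof -
  have rel: "((U, y), (W, x)) \<in> germ_rel A p"
    using assms unfolding germ_def by auto
  then show "spec_open A W" "p \<in> W" "x \<in> pr_carrier (presh A W)"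
    unfolding germ_rel_def by auto
  show "germ A p U y = germ A p W x"
    unfolding germ_def using equiv_class_eq[OF germ_rel_equiv rel] .
qed

context
  fixes p U V
  assumes U: "spec_open A U" "p \<in> U" and V: "spec_open A V" "p \<in> V"
begin

lemma germ_cls_eq_pairE:
  assumes a: "a \<in> car" "t \<in> S_of A U" "a' \<in> car" "t' \<in> S_of A V"
    and b: "b \<in> car" "r \<in> S_of A U" "b' \<in> car" "r' \<in> S_of A V"
    and "germ A p U (loc_cls A (S_of A U) a t) = germ A p V (loc_cls A (S_of A V) a' t')"
    and "germ A p U (loc_cls A (S_of A U) b r) = germ A p V (loc_cls A (S_of A V) b' r')"
  obtains W where "spec_open A W" "p \<in> W" "W \<subseteq> U" "W \<subseteq> V"
    "loc_cls A (S_of A W) a t = loc_cls A (S_of A W) a' t'"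
    "loc_cls A (S_of A W) b r = loc_cls A (S_of A W) b' r'"
proof -
  obtain W1 where W1: "spec_open A W1" "p \<in> W1" "W1 \<subseteq> U" "W1 \<subseteq> V"
      "loc_cls A (S_of A W1) a t = loc_cls A (S_of A W1) a' t'"
    using assms(9) germ_cls_eq_iff[OF U a(1,2) V a(3,4)] by blast
  obtain W2 where W2: "spec_open A W2" "p \<in> W2" "W2 \<subseteq> U" "W2 \<subseteq> V"
      "loc_cls A (S_of A W2) b r = loc_cls A (S_of A W2) b' r'"
    using assms(10) germ_cls_eq_iff[OF U b(1,2) V b(3,4)] by blast
  have W: "spec_open A (W1 \<inter> W2)" using W1 W2 spec_open_Int by blast
  have S: "t \<in> S_of A W1" "t' \<in> S_of A W1" "r \<in> S_of A W2" "r' \<in> S_of A W2"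
    using a b W1 W2 S_of_antimono by blast+
  show ?thesis
  proof (rule that)
    show "loc_cls A (S_of A (W1 \<inter> W2)) a t = loc_cls A (S_of A (W1 \<inter> W2)) a' t'"
      using loc_cls_eq_shrink[OF W1(1) W _ a(1) S(1) a(3) S(2) W1(5)] by blast
    show "loc_cls A (S_of A (W1 \<inter> W2)) b r = loc_cls A (S_of A (W1 \<inter> W2)) b' r'"
      using loc_cls_eq_shrink[OF W2(1) W _ b(1) S(3) b(3) S(4) W2(5)] by blast
  qed (use W W1 W2 in auto)
qed

lemma germ_mult_cong:
  assumes a: "a \<in> car" "t \<in> S_of A U" "a' \<in> car" "t' \<in> S_of A V"
    and b: "b \<in> car" "r \<in> S_of A U" "b' \<in> car" "r' \<in> S_of A V"
    and "germ A p U (loc_cls A (S_of A U) a t) = germ A p V (loc_cls A (S_of A V) a' t')"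
    and "germ A p U (loc_cls A (S_of A U) b r) = germ A p V (loc_cls A (S_of A V) b' r')"
  shows "germ A p U (loc_cls A (S_of A U) (a \<cdot> b) (t \<cdot> r)) =
         germ A p V (loc_cls A (S_of A V) (a' \<cdot> b') (t' \<cdot> r'))"
proof -
  obtain W where W: "spec_open A W" "p \<in> W" "W \<subseteq> U" "W \<subseteq> V"
      "loc_cls A (S_of A W) a t = loc_cls A (S_of A W) a' t'"
      "loc_cls A (S_of A W) b r = loc_cls A (S_of A W) b' r'"
    using germ_cls_eq_pairE[OF assms] .
  have S: "t \<in> S_of A W" "t' \<in> S_of A W" "r \<in> S_of A W" "r' \<in> S_of A W"
    using a b W S_of_antimono by blast+
  have "loc_cls A (S_of A W) (a \<cdot> b) (t \<cdot> r) = loc_cls A (S_of A W) (a' \<cdot> b') (t' \<cdot> r')"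
    using loc_cls_mult_cong[OF mult_subset_S_of_open[OF W(1)] a(1) S(1) a(3) S(2) b(1) S(3) b(3) S(4) W(5,6)] .
  moreover have "t \<cdot> r \<in> S_of A U" "t' \<cdot> r' \<in> S_of A V"
    using mult_subsetD(3)[OF mult_subset_S_of_open[OF U(1)] a(2) b(2)]
      mult_subsetD(3)[OF mult_subset_S_of_open[OF V(1)] a(4) b(4)] .
  ultimately show ?thesis
    using germ_cls_eq_iff[OF U mult_in_carrier[OF a(1) b(1)] _ V mult_in_carrier[OF a(3) b(3)]] W
    by blast
qed

lemma germ_add_cong:
  assumes a: "a \<in> car" "t \<in> S_of A U" "a' \<in> car" "t' \<in> S_of A V"
    and b: "b \<in> car" "r \<in> S_of A U" "b' \<in> car" "r' \<in> S_of A V"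
    and "germ A p U (loc_cls A (S_of A U) a t) = germ A p V (loc_cls A (S_of A V) a' t')"
    and "germ A p U (loc_cls A (S_of A U) b r) = germ A p V (loc_cls A (S_of A V) b' r')"
    and u: "u \<in> S_of A U" "u' \<in> S_of A V"
    and sm: "(u \<cdot> (r \<cdot> a), u \<cdot> (t \<cdot> b)) \<in> summ" "(u' \<cdot> (r' \<cdot> a'), u' \<cdot> (t' \<cdot> b')) \<in> summ"
  shows "germ A p U (loc_cls A (S_of A U) (u \<cdot> (r \<cdot> a) \<oplus> u \<cdot> (t \<cdot> b)) (u \<cdot> (t \<cdot> r))) =
         germ A p V (loc_cls A (S_of A V) (u' \<cdot> (r' \<cdot> a') \<oplus> u' \<cdot> (t' \<cdot> b')) (u' \<cdot> (t' \<cdot> r')))"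
proof -
  obtain W where W: "spec_open A W" "p \<in> W" "W \<subseteq> U" "W \<subseteq> V"
      "loc_cls A (S_of A W) a t = loc_cls A (S_of A W) a' t'"
      "loc_cls A (S_of A W) b r = loc_cls A (S_of A W) b' r'"
    using germ_cls_eq_pairE[OF assms(1-10)] .
  have S: "t \<in> S_of A W" "t' \<in> S_of A W" "r \<in> S_of A W" "r' \<in> S_of A W"
    "u \<in> S_of A W" "u' \<in> S_of A W"
    using a b u W S_of_antimono by blast+
  have "loc_cls A (S_of A W) (u \<cdot> (r \<cdot> a) \<oplus> u \<cdot> (t \<cdot> b)) (u \<cdot> (t \<cdot> r)) =
        loc_cls A (S_of A W) (u' \<cdot> (r' \<cdot> a') \<oplus> u' \<cdot> (t' \<cdot> b')) (u' \<cdot> (t' \<cdot> r'))"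
    using loc_cls_add_cong[OF mult_subset_S_of_open[OF W(1)] a(1) S(1) a(3) S(2) b(1) S(3) b(3) S(4)
        W(5,6) S(5,6) sm] .
  moreover have "u \<cdot> (t \<cdot> r) \<in> S_of A U" "u' \<cdot> (t' \<cdot> r') \<in> S_of A V"
    using mult_subsetD(3)[OF mult_subset_S_of_open[OF U(1)] u(1)
        mult_subsetD(3)[OF mult_subset_S_of_open[OF U(1)] a(2) b(2)]]
      mult_subsetD(3)[OF mult_subset_S_of_open[OF V(1)] u(2)
        mult_subsetD(3)[OF mult_subset_S_of_open[OF V(1)] a(4) b(4)]] .
  ultimately show ?thesis
    using germ_cls_eq_iff[OF U add_in_carrier[OF sm(1)] _ V add_in_carrier[OF sm(2)]] W
    by blast
qed

end

end

context partial_ring_ctx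
begin

lemma stalk_mult_germ:
  assumes U: "spec_open A U" "p \<in> U"
    and a: "a \<in> car" "t \<in> S_of A U" and b: "b \<in> car" "r \<in> S_of A U"
  shows "pr_mult (stalk A p) (germ A p U (loc_cls A (S_of A U) a t)) (germ A p U (loc_cls A (S_of A U) b r))
       = germ A p U (loc_cls A (S_of A U) (a \<cdot> b) (t \<cdot> r))"
  unfolding stalk_def pring.simps
proof (rule some_equality)
  show "\<exists>W x y. (W, x) \<in> germ A p U (loc_cls A (S_of A U) a t) \<and> (W, y) \<in> germ A p U (loc_cls A (S_of A U) b r) \<and>
      germ A p U (loc_cls A (S_of A U) (a \<cdot> b) (t \<cdot> r)) = germ A p W (pr_mult (presh A W) x y)"
    using germ_cls_self[OF U a] germ_cls_self[OF U b]
      loc_mult_cls[OF mult_subset_S_of_open[OF U(1)] a b] unfolding presh_def by metis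
next
  fix k assume "\<exists>W x y. (W, x) \<in> germ A p U (loc_cls A (S_of A U) a t) \<and>
      (W, y) \<in> germ A p U (loc_cls A (S_of A U) b r) \<and> k = germ A p W (pr_mult (presh A W) x y)"
  then obtain W x y where x: "(W, x) \<in> germ A p U (loc_cls A (S_of A U) a t)"
      and y: "(W, y) \<in> germ A p U (loc_cls A (S_of A U) b r)"
      and k: "k = germ A p W (pr_mult (presh A W) x y)"
    by blast
  note W = germ_memD(1,2)[OF x]
  obtain a' t' where a': "a' \<in> car" "t' \<in> S_of A W" "x = loc_cls A (S_of A W) a' t'"
    using presh_quotientE[OF W(1) germ_memD(3)[OF x]] by metis
  obtain b' r' where b': "b' \<in> car" "r' \<in> S_of A W" "y = loc_cls A (S_of A W) b' r'"
    using presh_quotientE[OF W(1) germ_memD(3)[OF y]] by metis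
  have "k = germ A p W (loc_cls A (S_of A W) (a' \<cdot> b') (t' \<cdot> r'))"
    using k loc_mult_cls[OF mult_subset_S_of_open[OF W(1)] a'(1,2) b'(1,2)]
    unfolding a'(3) b'(3) presh_def by simp
  then show "k = germ A p U (loc_cls A (S_of A U) (a \<cdot> b) (t \<cdot> r))"
    using germ_mult_cong[OF U W a a'(1,2) b b'(1,2)] germ_memD(4)[OF x] germ_memD(4)[OF y]
    unfolding a'(3) b'(3) by simp
qed

context
  fixes p U a t b r u
  assumes U: "spec_open A U" "p \<in> U"
    and a: "a \<in> car" "t \<in> S_of A U" and b: "b \<in> car" "r \<in> S_of A U" and u: "u \<in> S_of A U"
    and sm: "(u \<cdot> (r \<cdot> a), u \<cdot> (t \<cdot> b)) \<in> summ"
begin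

lemma stalk_summ_germ:
  "(germ A p U (loc_cls A (S_of A U) a t), germ A p U (loc_cls A (S_of A U) b r)) \<in> pr_summ (stalk A p)"
  unfolding stalk_def pring.simps presh_def
  using germ_cls_in_stalk[OF U a] germ_cls_in_stalk[OF U b] germ_cls_self[OF U a] germ_cls_self[OF U b]
    loc_summ_cls[OF mult_subset_S_of_open[OF U(1)] a b u sm] by blast

lemma stalk_add_germ:
  "pr_add (stalk A p) (germ A p U (loc_cls A (S_of A U) a t)) (germ A p U (loc_cls A (S_of A U) b r))
     = germ A p U (loc_cls A (S_of A U) (u \<cdot> (r \<cdot> a) \<oplus> u \<cdot> (t \<cdot> b)) (u \<cdot> (t \<cdot> r)))"
  unfolding stalk_def pring.simps
proof (rule some_equality)
  show "\<exists>W x y. (W, x) \<in> germ A p U (loc_cls A (S_of A U) a t) \<and> (W, y) \<in> germ A p U (loc_cls A (S_of A U) b r) \<and>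
      (x, y) \<in> pr_summ (presh A W) \<and>
      germ A p U (loc_cls A (S_of A U) (u \<cdot> (r \<cdot> a) \<oplus> u \<cdot> (t \<cdot> b)) (u \<cdot> (t \<cdot> r))) =
      germ A p W (pr_add (presh A W) x y)"
    using germ_cls_self[OF U a] germ_cls_self[OF U b]
      loc_summ_cls[OF mult_subset_S_of_open[OF U(1)] a b u sm]
      loc_add_cls[OF mult_subset_S_of_open[OF U(1)] a b u sm] unfolding presh_def by metis
next
  fix k assume "\<exists>W x y. (W, x) \<in> germ A p U (loc_cls A (S_of A U) a t) \<and>
      (W, y) \<in> germ A p U (loc_cls A (S_of A U) b r) \<and> (x, y) \<in> pr_summ (presh A W) \<and>
      k = germ A p W (pr_add (presh A W) x y)"
  then obtain W x y where x: "(W, x) \<in> germ A p U (loc_cls A (S_of A U) a t)"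
      and y: "(W, y) \<in> germ A p U (loc_cls A (S_of A U) b r)"
      and xy: "(x, y) \<in> pr_summ (loc A (S_of A W))"
      and k: "k = germ A p W (pr_add (loc A (S_of A W)) x y)"
    unfolding presh_def by blast
  note W = germ_memD(1,2)[OF x]
  have W_mult: "mult_subset (S_of A W)"
    using mult_subset_S_of_open[OF W(1)] .
  obtain a' t' b' r' u' where "x \<in> (car \<times> S_of A W) // loc_rel A (S_of A W)"
      "y \<in> (car \<times> S_of A W) // loc_rel A (S_of A W)" "(a', t') \<in> x" "(b', r') \<in> y"
      and u': "u' \<in> S_of A W" and sm': "(u' \<cdot> (r' \<cdot> a'), u' \<cdot> (t' \<cdot> b')) \<in> summ"
    using xy unfolding loc_def pring.simps by blast
  then have a': "a' \<in> car" "t' \<in> S_of A W" "x = loc_cls A (S_of A W) a' t'"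
    and b': "b' \<in> car" "r' \<in> S_of A W" "y = loc_cls A (S_of A W) b' r'"
    using loc_quotient_mem[OF W_mult] by blast+
  have "k = germ A p W (loc_cls A (S_of A W) (u' \<cdot> (r' \<cdot> a') \<oplus> u' \<cdot> (t' \<cdot> b')) (u' \<cdot> (t' \<cdot> r')))"
    using k loc_add_cls[OF W_mult a'(1,2) b'(1,2) u' sm'] unfolding a'(3) b'(3) by simp
  then show "k = germ A p U (loc_cls A (S_of A U) (u \<cdot> (r \<cdot> a) \<oplus> u \<cdot> (t \<cdot> b)) (u \<cdot> (t \<cdot> r)))"
    using germ_add_cong[OF U W a a'(1,2) b b'(1,2) _ _ u u' sm sm'] germ_memD(4)[OF x] germ_memD(4)[OF y]
    unfolding a'(3) b'(3) by simp
qed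

end

end

section \<open>Prime ideals avoiding a multiplicative subset\<close>

context partial_ring_ctx
begin

lemma ideal_subset_carrier: "pr_ideal A M \<Longrightarrow> M \<subseteq> car"
  and ideal_zero: "pr_ideal A M \<Longrightarrow> \<zero> \<in> M"
  and ideal_add: "pr_ideal A M \<Longrightarrow> x \<in> M \<Longrightarrow> y \<in> M \<Longrightarrow> (x, y) \<in> summ \<Longrightarrow> x \<oplus> y \<in> M"
  and ideal_mult_left: "pr_ideal A M \<Longrightarrow> m \<in> M \<Longrightarrow> x \<in> car \<Longrightarrow> x \<cdot> m \<in> M"
  unfolding pr_ideal_def by auto

lemma ideal_mult_right: "pr_ideal A M \<Longrightarrow> m \<in> M \<Longrightarrow> x \<in> car \<Longrightarrow> m \<cdot> x \<in> M"
  using ideal_mult_left ideal_subset_carrier mult_comm by (metis subsetD)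

lemma pr_ideal_equalizer:
  assumes "x \<in> car" "y \<in> car"
  shows "pr_ideal A {u \<in> car. u \<cdot> x = u \<cdot> y}"
  unfolding pr_ideal_def
proof (intro conjI ballI impI)
  fix u v assume "u \<in> {u \<in> car. u \<cdot> x = u \<cdot> y}" "v \<in> {u \<in> car. u \<cdot> x = u \<cdot> y}" "(u, v) \<in> summ"
  then show "u \<oplus> v \<in> {u \<in> car. u \<cdot> x = u \<cdot> y}"
    using distrib_right[of u v x] distrib_right[of u v y] assms by auto
next
  fix u c assume "u \<in> {u \<in> car. u \<cdot> x = u \<cdot> y}" "c \<in> car"
  then show "c \<cdot> u \<in> {u \<in> car. u \<cdot> x = u \<cdot> y}"
    using assms by (auto simp: mult_assoc)
qed (use assms in auto)

text \<open>The ideal \<open>M + (a)\<close>: sums exist only for summable pairs, so it is generated inductively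
  rather than written as \<open>{m + x a}\<close>.\<close>

inductive_set ideal_ext :: "'a set \<Rightarrow> 'a \<Rightarrow> 'a set" for M a where
  base: "m \<in> M \<Longrightarrow> m \<in> ideal_ext M a"
| gen: "x \<in> car \<Longrightarrow> x \<cdot> a \<in> ideal_ext M a"
| add: "x \<in> ideal_ext M a \<Longrightarrow> y \<in> ideal_ext M a \<Longrightarrow> (x, y) \<in> summ \<Longrightarrow> x \<oplus> y \<in> ideal_ext M a"
| mult: "x \<in> ideal_ext M a \<Longrightarrow> c \<in> car \<Longrightarrow> c \<cdot> x \<in> ideal_ext M a"

lemma ideal_ext_in_carrier:
  assumes "M \<subseteq> car" "a \<in> car" "x \<in> ideal_ext M a"
  shows "x \<in> car"
  using assms(3) by induct (use assms in auto)

lemma pr_ideal_ideal_ext: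
  assumes M: "pr_ideal A M" and a: "a \<in> car"
  shows "pr_ideal A (ideal_ext M a)"
  unfolding pr_ideal_def
  using ideal_ext_in_carrier[OF ideal_subset_carrier[OF M] a] ideal_ext.base[OF ideal_zero[OF M]]
    ideal_ext.add ideal_ext.mult by blast

context
  fixes M a b
  assumes M: "pr_ideal A M" and a: "a \<in> car" and b: "b \<in> car" and ab: "a \<cdot> b \<in> M"
begin

lemma ideal_ext_mult_gen:
  assumes "c \<in> car" "y \<in> ideal_ext M b"
  shows "c \<cdot> a \<cdot> y \<in> M"
  using assms(2)
proof induct
  case (base m)
  then show ?case using ideal_mult_left[OF M] assms(1) a by simp
next
  case (gen d)
  have "c \<cdot> a \<cdot> (d \<cdot> b) = c \<cdot> d \<cdot> (a \<cdot> b)"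
    using gen a b assms(1) by (simp add: mult_ac)
  then show ?case using ideal_mult_left[OF M ab] gen assms(1) by simp
next
  case (add y1 y2)
  then show ?case
    using distrib_left[OF add(5), of "c \<cdot> a"] ideal_add[OF M] assms(1) a by auto
next
  case (mult y d)
  have "y \<in> car" using ideal_ext_in_carrier[OF ideal_subset_carrier[OF M] b mult(1)] .
  then have "c \<cdot> a \<cdot> (d \<cdot> y) = d \<cdot> (c \<cdot> a \<cdot> y)" using mult assms(1) a by (simp add: mult_ac)
  then show ?case using ideal_mult_left[OF M] mult by auto
qed

lemma ideal_ext_mult:
  assumes "x \<in> ideal_ext M a" "y \<in> ideal_ext M b"
  shows "x \<cdot> y \<in> M"
  using assms(1)
proof induct
  case (base m)
  then show ?case
    using ideal_mult_right[OF M] ideal_ext_in_carrier[OF ideal_subset_carrier[OF M] b assms(2)] by auto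
next
  case (gen c)
  then show ?case using ideal_ext_mult_gen assms(2) by blast
next
  case (add x1 x2)
  then show ?case
    using distrib_right[OF add(5)] ideal_add[OF M]
      ideal_ext_in_carrier[OF ideal_subset_carrier[OF M] b assms(2)] by auto
next
  case (mult x c)
  have "x \<in> car" "y \<in> car"
    using ideal_ext_in_carrier[OF ideal_subset_carrier[OF M]] a b mult(1) assms(2) by auto
  then have "c \<cdot> x \<cdot> y = c \<cdot> (x \<cdot> y)" using mult by (simp add: mult_assoc)
  then show ?case using ideal_mult_left[OF M] mult by auto
qed

end

lemma pr_ideal_Union_chain:
  assumes "C \<noteq> {}" "subset.chain {J. pr_ideal A J} C"
  shows "pr_ideal A (\<Union>C)"
  unfolding pr_ideal_def
proof (intro conjI ballI impI)
  have ideal: "\<And>J. J \<in> C \<Longrightarrow> pr_ideal A J" and lin: "\<And>X Y. X \<in> C \<Longrightarrow> Y \<in> C \<Longrightarrow> X \<subseteq> Y \<or> Y \<subseteq> X"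
    using assms(2) unfolding subset_chain_def by auto
  show "\<Union>C \<subseteq> car" using ideal ideal_subset_carrier by blast
  show "\<zero> \<in> \<Union>C" using assms(1) ideal ideal_zero by blast
  fix x y assume "x \<in> \<Union>C" "y \<in> \<Union>C" "(x, y) \<in> summ"
  then obtain X Y where "X \<in> C" "Y \<in> C" "x \<in> X" "y \<in> Y" "(x, y) \<in> summ" by auto
  then show "x \<oplus> y \<in> \<Union>C"
    using lin[of X Y] ideal ideal_add by (metis UnionI subsetD)
next
  fix x c assume "x \<in> \<Union>C" "c \<in> car"
  then show "c \<cdot> x \<in> \<Union>C"
    using assms(2) ideal_mult_left unfolding subset_chain_def by blast
qed

text \<open>Zorn's lemma yields an ideal \<open>M\<close> maximal among those containing \<open>I\<close> and missing \<open>T\<close>.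
  If \<open>a b \<in> M\<close> with \<open>a, b \<notin> M\<close>, maximality puts elements of \<open>T\<close> into both \<open>M + (a)\<close> and
  \<open>M + (b)\<close>, and their product lies in \<open>M \<inter> T\<close>.\<close>

lemma prime_ideal_avoiding:
  assumes I: "pr_ideal A I" and T: "mult_subset T" and disj: "I \<inter> T = {}"
  obtains P where "pr_prime A P" "I \<subseteq> P" "P \<inter> T = {}"
proof -
  define F where "F = {J. pr_ideal A J \<and> I \<subseteq> J \<and> J \<inter> T = {}}"
  have "\<Union>C \<in> F" if C: "C \<noteq> {}" "subset.chain F C" for C
  proof -
    have "C \<subseteq> F" using C(2) unfolding subset_chain_def by blast
    moreover have "subset.chain {J. pr_ideal A J} C"
      using C(2) unfolding F_def subset_chain_def by blast
    ultimately show ?thesis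
      using pr_ideal_Union_chain[OF C(1)] C(1) unfolding F_def by blast
  qed
  moreover have "I \<in> F" using I disj unfolding F_def by auto
  ultimately obtain M where "M \<in> F" and max: "\<forall>X\<in>F. M \<subseteq> X \<longrightarrow> X = M"
    using subset_Zorn_nonempty[of F] by blast
  then have M: "pr_ideal A M" "I \<subseteq> M" "M \<inter> T = {}" unfolding F_def by auto
  have meets_T: "ideal_ext M c \<inter> T \<noteq> {}" if c: "c \<in> car" "c \<notin> M" for c
  proof
    assume "ideal_ext M c \<inter> T = {}"
    moreover have "M \<subseteq> ideal_ext M c" by (auto intro: ideal_ext.base)
    ultimately have "ideal_ext M c \<in> F" "M \<subseteq> ideal_ext M c"
      using pr_ideal_ideal_ext[OF M(1) c(1)] M(2) unfolding F_def by auto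
    then have "ideal_ext M c = M" using max by blast
    moreover have "\<one> \<cdot> c \<in> ideal_ext M c" by (rule ideal_ext.gen) simp
    ultimately show False using c by auto
  qed
  have "pr_prime A M"
    unfolding pr_prime_def
  proof (intro conjI ballI impI)
    show "M \<noteq> car" using M(3) mult_subsetD(2)[OF T] one_in_carrier by blast
  next
    fix a b assume ab: "a \<in> car" "b \<in> car" "a \<cdot> b \<in> M"
    show "a \<in> M \<or> b \<in> M"
    proof (rule ccontr)
      assume "\<not> (a \<in> M \<or> b \<in> M)"
      then obtain x y where xy: "x \<in> ideal_ext M a" "y \<in> ideal_ext M b" "x \<in> T" "y \<in> T"
        using meets_T ab by blast
      then have "x \<cdot> y \<in> M \<inter> T"
        using ideal_ext_mult[OF M(1) ab xy(1,2)] mult_subsetD(3)[OF T xy(3,4)] by blast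
      with M(3) show False by blast
    qed
  qed (fact M(1))
  then show ?thesis using M(2,3) by (rule that)
qed

end

section \<open>The canonical map into the structure sheaf\<close>

text \<open>For \<open>T \<subseteq> S\<^sub>U\<close>, \<open>presh_res A U U\<close> re-reads a class of \<open>T\<^sup>-\<^sup>1A\<close> as a class of \<open>S\<^sub>U\<^sup>-\<^sup>1A\<close>.\<close>

definition loc_to_OX :: "'a pring \<Rightarrow> 'a set set \<Rightarrow> ('a \<times> 'a) set \<Rightarrow> 'a set \<Rightarrow> 'a germ" where
  "loc_to_OX A U X = (\<lambda>p. if p \<in> U then germ A p U (presh_res A U U X) else undefined)"

context partial_ring_ctx
begin

lemma germ_cls_one_Spec:
  assumes "spec_open A U" "p \<in> U" "c \<in> car"
  shows "germ A p U (loc_cls A (S_of A U) c \<one>) =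
         germ A p (Spec_pts A) (loc_cls A (S_of A (Spec_pts A)) c \<one>)"
  using germ_cls_change_open[OF assms(1,2) spec_open_Spec_pts _ assms(3)] assms
    spec_open_subset mult_subsetD(2)[OF mult_subset_S_of_open] spec_open_Spec_pts by blast

context
  fixes U T
  assumes U: "spec_open A U" and T: "mult_subset T" and T_sub: "T \<subseteq> S_of A U"
begin

lemma loc_to_OX_cls:
  assumes "a \<in> car" "t \<in> T"
  shows "loc_to_OX A U (loc_cls A T a t) =
    (\<lambda>p. if p \<in> U then germ A p U (loc_cls A (S_of A U) a t) else undefined)"
  unfolding loc_to_OX_def presh_res_cls[OF T spec_open_subset[OF U] T_sub assms] ..

lemma loc_to_OX_in_carrier:
  assumes "X \<in> pr_carrier (loc A T)"
  shows "loc_to_OX A U X \<in> pr_carrier (OX A U)"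
proof -
  obtain a t where a: "a \<in> car" "t \<in> T" "X = loc_cls A T a t"
    using loc_quotientE[OF T] assms unfolding loc_carrier by metis
  have t: "t \<in> S_of A U" using T_sub a(2) by blast
  have "loc_cls A (S_of A U) a t \<in> pr_carrier (presh A U)"
    unfolding presh_carrier using loc_cls_in_quotient[OF mult_subset_S_of_open[OF U] a(1) t] .
  then show ?thesis
    unfolding OX_def pring.simps OX_carrier_def a(3) loc_to_OX_cls[OF a(1,2)]
    using germ_cls_in_stalk[OF U _ a(1) t] U by (auto intro!: exI[of _ U])
qed

lemma loc_to_OX_zero: "loc_to_OX A U (pr_zero (loc A T)) = pr_zero (OX A U)"
  and loc_to_OX_one: "loc_to_OX A U (pr_one (loc A T)) = pr_one (OX A U)"
  unfolding loc_zero loc_one loc_to_OX_cls[OF zero_in_carrier mult_subsetD(2)[OF T]]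
    loc_to_OX_cls[OF one_in_carrier mult_subsetD(2)[OF T]]
  unfolding OX_def stalk_def presh_def pring.simps loc_zero loc_one
  using germ_cls_one_Spec[OF U] by (auto intro!: ext)

lemma loc_to_OX_mult:
  assumes "X \<in> pr_carrier (loc A T)" "Y \<in> pr_carrier (loc A T)"
  shows "loc_to_OX A U (pr_mult (loc A T) X Y) = pr_mult (OX A U) (loc_to_OX A U X) (loc_to_OX A U Y)"
proof -
  obtain a t b r where a: "a \<in> car" "t \<in> T" "X = loc_cls A T a t"
    and b: "b \<in> car" "r \<in> T" "Y = loc_cls A T b r"
    using loc_quotientE[OF T] assms unfolding loc_carrier by metis
  have "t \<in> S_of A U" "r \<in> S_of A U" using T_sub a b by blast+
  then show ?thesis
    unfolding a(3) b(3) loc_mult_cls[OF T a(1,2) b(1,2)] OX_def pring.simps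
      loc_to_OX_cls[OF a(1,2)] loc_to_OX_cls[OF b(1,2)]
      loc_to_OX_cls[OF mult_in_carrier[OF a(1) b(1)] mult_subsetD(3)[OF T a(2) b(2)]]
    using stalk_mult_germ[OF U _ a(1) _ b(1)] by (auto intro!: ext)
qed

lemma loc_to_OX_add:
  assumes "(X, Y) \<in> pr_summ (loc A T)"
  shows "(loc_to_OX A U X, loc_to_OX A U Y) \<in> pr_summ (OX A U)"
    "loc_to_OX A U (pr_add (loc A T) X Y) = pr_add (OX A U) (loc_to_OX A U X) (loc_to_OX A U Y)"
proof -
  obtain a t b r u where "X \<in> (car \<times> T) // loc_rel A T" "Y \<in> (car \<times> T) // loc_rel A T"
      "(a, t) \<in> X" "(b, r) \<in> Y" and u: "u \<in> T" and sm: "(u \<cdot> (r \<cdot> a), u \<cdot> (t \<cdot> b)) \<in> summ"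
    using assms unfolding loc_def pring.simps by blast
  then have a: "a \<in> car" "t \<in> T" "X = loc_cls A T a t"
    and b: "b \<in> car" "r \<in> T" "Y = loc_cls A T b r"
    using loc_quotient_mem[OF T] by blast+
  have S: "t \<in> S_of A U" "r \<in> S_of A U" "u \<in> S_of A U" using T_sub a b u by blast+
  have "X \<in> pr_carrier (loc A T)" "Y \<in> pr_carrier (loc A T)"
    using a b loc_cls_in_quotient[OF T] unfolding loc_carrier by auto
  then have "loc_to_OX A U X \<in> OX_carrier A U" "loc_to_OX A U Y \<in> OX_carrier A U"
    using loc_to_OX_in_carrier unfolding OX_def by auto
  then show "(loc_to_OX A U X, loc_to_OX A U Y) \<in> pr_summ (OX A U)"
    using stalk_summ_germ[OF U _ a(1) S(1) b(1) S(2) S(3) sm]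
    unfolding OX_def pring.simps a(3) b(3) loc_to_OX_cls[OF a(1,2)] loc_to_OX_cls[OF b(1,2)] by auto
  have d: "u \<cdot> (t \<cdot> r) \<in> T" using mult_subsetD(3)[OF T u mult_subsetD(3)[OF T a(2) b(2)]] .
  show "loc_to_OX A U (pr_add (loc A T) X Y) = pr_add (OX A U) (loc_to_OX A U X) (loc_to_OX A U Y)"
    unfolding a(3) b(3) loc_add_cls[OF T a(1,2) b(1,2) u sm] OX_def pring.simps
      loc_to_OX_cls[OF a(1,2)] loc_to_OX_cls[OF b(1,2)] loc_to_OX_cls[OF add_in_carrier[OF sm] d]
    using stalk_add_germ[OF U _ a(1) S(1) b(1) S(2) S(3) sm] by (auto intro!: ext)
qed

lemma loc_to_OX_hom: "pr_hom (loc A T) (OX A U) (loc_to_OX A U)"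
  unfolding pr_hom_def
  using loc_to_OX_in_carrier loc_to_OX_zero loc_to_OX_one loc_to_OX_mult loc_to_OX_add by auto

lemma loc_to_OX_inj:
  assumes primes_in_U: "\<And>P. pr_prime A P \<Longrightarrow> P \<inter> T = {} \<Longrightarrow> P \<in> U"
  shows "inj_on (loc_to_OX A U) (pr_carrier (loc A T))"
proof (rule inj_onI)
  fix X Y assume "X \<in> pr_carrier (loc A T)" "Y \<in> pr_carrier (loc A T)"
    and eq: "loc_to_OX A U X = loc_to_OX A U Y"
  then obtain a t b r where a: "a \<in> car" "t \<in> T" "X = loc_cls A T a t"
    and b: "b \<in> car" "r \<in> T" "Y = loc_cls A T b r"
    using loc_quotientE[OF T] unfolding loc_carrier by metis
  have S: "t \<in> S_of A U" "r \<in> S_of A U" "t \<in> car" "r \<in> car"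
    using T_sub a b mult_subsetD(1)[OF T] by blast+
  define I where "I = {u \<in> car. u \<cdot> (r \<cdot> a) = u \<cdot> (t \<cdot> b)}"
  have I: "pr_ideal A I"
    unfolding I_def using pr_ideal_equalizer a(1) b(1) S(3,4) by simp
  have "I \<inter> T \<noteq> {}"
  proof
    assume "I \<inter> T = {}"
    then obtain P where P: "pr_prime A P" "I \<subseteq> P" "P \<inter> T = {}"
      by (rule prime_ideal_avoiding[OF I T])
    have "P \<in> U" using P(1,3) by (rule primes_in_U)
    then have "germ A P U (loc_cls A (S_of A U) a t) = germ A P U (loc_cls A (S_of A U) b r)"
      using fun_cong[OF eq, of P] unfolding a(3) b(3) loc_to_OX_cls[OF a(1,2)] loc_to_OX_cls[OF b(1,2)]
      by simp
    then obtain W where W: "spec_open A W" "P \<in> W" "W \<subseteq> U"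
        "loc_cls A (S_of A W) a t = loc_cls A (S_of A W) b r"
      using germ_cls_eq_iff[OF U \<open>P \<in> U\<close> a(1) S(1) U \<open>P \<in> U\<close> b(1) S(2)] by blast
    have "t \<in> S_of A W" "r \<in> S_of A W" using S_of_antimono[OF W(3)] S by blast+
    then obtain u where u: "u \<in> S_of A W" "u \<cdot> (r \<cdot> a) = u \<cdot> (t \<cdot> b)"
      using loc_cls_eq_iff[OF mult_subset_S_of_open[OF W(1)] a(1) _ b(1)] W(4) by blast
    then have "u \<in> I" "u \<notin> P" using W(2) unfolding I_def S_of_def by auto
    with P(2) show False by blast
  qed
  then obtain u where "u \<in> T" "u \<cdot> (r \<cdot> a) = u \<cdot> (t \<cdot> b)" unfolding I_def by blast
  then show "X = Y"
    unfolding a(3) b(3) using loc_cls_eq_iff[OF T a(1,2) b(1,2)] by blast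
qed

end

end

theorem mainTheorem12:
  fixes A :: "'a pring" and s :: 'a
  assumes "partial_ring A"
    and "s \<in> pr_carrier A"
  shows "\<exists>f. pr_mono (loc_at A s) (OX A (basicD A s)) f"
proof -
  interpret partial_ring_ctx A by unfold_locales (fact assms(1))
  note Ds = spec_open_basicD[OF assms(2)] mult_subset_powers[OF assms(2)]
    powers_subset_S_of_basicD[OF assms(2)]
  have "P \<in> basicD A s" if "pr_prime A P" "P \<inter> pr_powers A s = {}" for P
    using that base_in_powers[OF assms(2)] unfolding basicD_def Spec_pts_def by blast
  then have "pr_mono (loc A (pr_powers A s)) (OX A (basicD A s)) (loc_to_OX A (basicD A s))"
    unfolding pr_mono_def using loc_to_OX_hom[OF Ds] loc_to_OX_inj[OF Ds] by blast
  then show ?thesis unfolding loc_at_eq by blast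
qed

end
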